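(* The weighted greedy algorithm w-HHL is an $O(\sqrt n\log n)$-approximation algorithm for HL: on every input graph with $n$ vertices, the hub labeling it outputs has total size at most $O(\sqrt n\log n)$ times the minimum total size of a hub labeling of that graph.
   Context: Input: a directed graph $G=(V,E)$, $n=|V|$, with nonnegative arc lengths and no zero-length cycles. A hub labeling (HL) assigns to each $v$ a forward label $L_f(v)\subseteq V$ and backward label $L_b(v)\subseteq V$ such that for every ordered pair $(u,w)$ with $w$ reachable from $u$, $L_f(u)\cap L_b(w)$ contains a vertex on some shortest $u$–$w$ path; its size is $\sum_v(|L_f(v)|+|L_b(v)|)$. (Undirected graphs: $L_f=L_b=L$, unordered pairs, size $\sum_v|L(v)|$.) w-HHL: start with empty labels; $U$ is the set of uncovered pairs. For each not-yet-selected vertex $v$, the center graph $G_v$ is the bipartite graph with two copies $X,Y$ of $V$ and an arc $(u,w)$ for each $(u,w)\in U$ having a shortest $u$–$w$ path through $v$, with isolated vertices deleted (undirected case: graph on $V$ with an edge, possibly a loop, for each such uncovered unordered pair, isolated vertices deleted). In each iteration w-HHL selects a not-yet-selected $v$ whose center graph has maximum density (number of edges divided by number of non-isolated vertices; ties arbitrary) and adds $v$ to $L_f(u)$ for each vertex $u\in X$ and $L_b(w)$ for each $w\in Y$ of that center graph (undirected: to $L(u)$ for each of its vertices $u$), until all pairs are covered. *)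

theory Defs
  imports Main Complex_Main
begin

definition walk :: "(nat \<times> nat) set \<Rightarrow> nat list \<Rightarrow> bool" where
  "walk E p \<longleftrightarrow> p \<noteq> [] \<and> successively (\<lambda>x y. (x, y) \<in> E) p"

definition walk_len :: "(nat \<Rightarrow> nat \<Rightarrow> real) \<Rightarrow> nat list \<Rightarrow> real" where
  "walk_len l p = sum_list (map (\<lambda>(x, y). l x y) (zip p (tl p)))"

definition is_path :: "nat set \<Rightarrow> (nat \<times> nat) set \<Rightarrow> nat \<Rightarrow> nat \<Rightarrow> nat list \<Rightarrow> bool" where
  "is_path V E u w p \<longleftrightarrow> walk E p \<and> hd p = u \<and> last p = w \<and> distinct p \<and> set p \<subseteq> V"

definition shortest_path ::
  "nat set \<Rightarrow> (nat \<times> nat) set \<Rightarrow> (nat \<Rightarrow> nat \<Rightarrow> real) \<Rightarrow> nat \<Rightarrow> nat \<Rightarrow> nat list \<Rightarrow> bool" where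
  "shortest_path V E l u w p \<longleftrightarrow>
     is_path V E u w p \<and> (\<forall>q. is_path V E u w q \<longrightarrow> walk_len l p \<le> walk_len l q)"

definition reachable :: "nat set \<Rightarrow> (nat \<times> nat) set \<Rightarrow> nat \<Rightarrow> nat \<Rightarrow> bool" where
  "reachable V E u w \<longleftrightarrow> (\<exists>p. is_path V E u w p)"

definition graph_ok :: "nat set \<Rightarrow> (nat \<times> nat) set \<Rightarrow> (nat \<Rightarrow> nat \<Rightarrow> real) \<Rightarrow> bool" where
  "graph_ok V E l \<longleftrightarrow> finite V \<and> E \<subseteq> V \<times> V \<and> (\<forall>(x, y) \<in> E. 0 \<le> l x y) \<and>
     (\<forall>p. walk E p \<and> 2 \<le> length p \<and> hd p = last p \<longrightarrow> 0 < walk_len l p)"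

definition covers ::
  "nat set \<Rightarrow> (nat \<times> nat) set \<Rightarrow> (nat \<Rightarrow> nat \<Rightarrow> real) \<Rightarrow> (nat \<Rightarrow> nat set) \<Rightarrow> (nat \<Rightarrow> nat set)
     \<Rightarrow> nat \<Rightarrow> nat \<Rightarrow> bool" where
  "covers V E l Lf Lb u w \<longleftrightarrow>
     (\<exists>h \<in> Lf u \<inter> Lb w. \<exists>p. shortest_path V E l u w p \<and> h \<in> set p)"

definition is_HL ::
  "nat set \<Rightarrow> (nat \<times> nat) set \<Rightarrow> (nat \<Rightarrow> nat \<Rightarrow> real) \<Rightarrow> (nat \<Rightarrow> nat set) \<Rightarrow> (nat \<Rightarrow> nat set) \<Rightarrow> bool" where
  "is_HL V E l Lf Lb \<longleftrightarrow> (\<forall>v \<in> V. Lf v \<subseteq> V \<and> Lb v \<subseteq> V) \<and>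
     (\<forall>u \<in> V. \<forall>w \<in> V. reachable V E u w \<longrightarrow> covers V E l Lf Lb u w)"

definition hl_size :: "nat set \<Rightarrow> (nat \<Rightarrow> nat set) \<Rightarrow> (nat \<Rightarrow> nat set) \<Rightarrow> nat" where
  "hl_size V Lf Lb = (\<Sum>v \<in> V. card (Lf v) + card (Lb v))"

definition uncovered ::
  "nat set \<Rightarrow> (nat \<times> nat) set \<Rightarrow> (nat \<Rightarrow> nat \<Rightarrow> real) \<Rightarrow> (nat \<Rightarrow> nat set) \<Rightarrow> (nat \<Rightarrow> nat set)
     \<Rightarrow> (nat \<times> nat) set" where
  "uncovered V E l Lf Lb = {(u, w). u \<in> V \<and> w \<in> V \<and> reachable V E u w \<and> \<not> covers V E l Lf Lb u w}"

text \<open>Arc set of the center graph G_v (bipartite, X = left copies, Y = right copies);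
  its non-isolated vertices are Domain (X side) and Range (Y side).\<close>
definition center_graph ::
  "nat set \<Rightarrow> (nat \<times> nat) set \<Rightarrow> (nat \<Rightarrow> nat \<Rightarrow> real) \<Rightarrow> (nat \<Rightarrow> nat set) \<Rightarrow> (nat \<Rightarrow> nat set)
     \<Rightarrow> nat \<Rightarrow> (nat \<times> nat) set" where
  "center_graph V E l Lf Lb v =
     {(u, w) \<in> uncovered V E l Lf Lb. \<exists>p. shortest_path V E l u w p \<and> v \<in> set p}"

definition density :: "(nat \<times> nat) set \<Rightarrow> real" where
  "density A = real (card A) / real (card (Domain A) + card (Range A))"

type_synonym state = "nat set \<times> (nat \<Rightarrow> nat set) \<times> (nat \<Rightarrow> nat set)"

definition whhl_step ::
  "nat set \<Rightarrow> (nat \<times> nat) set \<Rightarrow> (nat \<Rightarrow> nat \<Rightarrow> real) \<Rightarrow> state \<Rightarrow> state \<Rightarrow> bool" where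
  "whhl_step V E l st st' =
    (case st of (S, Lf, Lb) \<Rightarrow> case st' of (S', Lf', Lb') \<Rightarrow>
      uncovered V E l Lf Lb \<noteq> {} \<and>
      (\<exists>v \<in> V - S.
         (\<forall>v' \<in> V - S. density (center_graph V E l Lf Lb v') \<le> density (center_graph V E l Lf Lb v)) \<and>
         S' = insert v S \<and>
         Lf' = (\<lambda>u. if u \<in> Domain (center_graph V E l Lf Lb v) then insert v (Lf u) else Lf u) \<and>
         Lb' = (\<lambda>w. if w \<in> Range (center_graph V E l Lf Lb v) then insert v (Lb w) else Lb w)))"

text \<open>(Lf, Lb) is a possible output of w-HHL (for some resolution of ties).\<close>
definition whhl_output ::
  "nat set \<Rightarrow> (nat \<times> nat) set \<Rightarrow> (nat \<Rightarrow> nat \<Rightarrow> real) \<Rightarrow> (nat \<Rightarrow> nat set) \<Rightarrow> (nat \<Rightarrow> nat set) \<Rightarrow> bool" where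
  "whhl_output V E l Lf Lb \<longleftrightarrow>
     (\<exists>S. (whhl_step V E l)\<^sup>*\<^sup>* ({}, (\<lambda>_. {}), (\<lambda>_. {})) (S, Lf, Lb)) \<and> uncovered V E l Lf Lb = {}"

end

theory Submission
  imports Defs "HOL-Analysis.Harmonic_Numbers"
begin

text \<open>This is the greedy set-cover analysis. Charge the labels added in one step,
  |Domain G| + |Range G| for the selected center graph G, evenly to the |G| pairs it covers, so that
  each pays 1 / density G. Let U be the set of uncovered pairs and OPT the size of an optimal
  labeling (Lf', Lb'). Every pair of U lies in the biclique X_h \<times> Y_h = {u. h \<in> Lf' u} \<times> {w. h \<in> Lb' w}
  of one of its optimal hubs h, and the sides of these bicliques sum to OPT; by averaging, some h
  has A = G_h \<inter> X_h \<times> Y_h with |A| \<ge> r (|X_h| + |Y_h|), where r = |U| / OPT. As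
  |A| \<le> |X_h| |Y_h| \<le> (|X_h| + |Y_h|)^2 / 4, this gives 4 r^2 \<le> |A| \<le> |G_h| \<le> 2 n density G_h, and
  density G_h \<ge> 1/2 yields r \<le> sqrt n density G_h. So every pair is charged at most
  sqrt n OPT / |U|, and the charges add up to at most sqrt n OPT harm (n^2) = O(sqrt n log n) OPT.\<close>

subsection \<open>Harmonic numbers\<close>

lemma harm_diff_ge:
  assumes "a \<le> b"
  shows "real (b - a) \<le> real b * (harm b - harm a)"
  using assms
proof (induction b)
  case 0
  then show ?case by simp
next
  case (Suc b)
  show ?case
  proof (cases "a = Suc b")
    case False
    then have ab: "a \<le> b" using Suc.prems by simp
    have "real (Suc b - a) = real (b - a) + 1" using ab by simp
    also have "\<dots> \<le> real b * (harm b - harm a) + 1" using Suc.IH ab by simp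
    also have "\<dots> \<le> real (Suc b) * (harm b - harm a) + 1"
      using harm_mono[OF ab, where 'a=real] by (simp add: mult_right_mono)
    also have "\<dots> = real (Suc b) * (harm (Suc b) - harm a)"
      by (simp add: harm_Suc field_simps)
    finally show ?thesis .
  qed simp
qed

lemma harm_le_one_plus_ln:
  assumes "0 < n"
  shows "harm n \<le> 1 + ln (real n)"
  using euler_mascheroni_sequence_decreasing[of 1 n] assms by (simp add: harm_def)

lemma greedy_charge_le_harm_diff:
  fixes K :: real
  assumes "U' \<le> U" "m \<le> U - U'" "0 < U" "0 \<le> K"
    and "real c * real U \<le> K * real m"
  shows "real c \<le> K * (harm U - harm U')"
proof -
  have "real c * real U \<le> K * real (U - U')"
    using assms(2,4,5) by (meson mult_left_mono of_nat_mono order_trans)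
  also have "\<dots> \<le> K * (real U * (harm U - harm U'))"
    using harm_diff_ge[OF assms(1)] assms(4) by (rule mult_left_mono)
  finally have "real U * real c \<le> real U * (K * (harm U - harm U'))"
    by (simp add: algebra_simps)
  then show ?thesis using assms(3) by simp
qed

subsection \<open>Averaging and density\<close>

lemma exists_ratio_ge_average:
  fixes a c :: "'i \<Rightarrow> real"
  assumes "finite I" "i0 \<in> I" "0 < a i0" "\<forall>i\<in>I. 0 \<le> a i \<and> 0 \<le> c i" "0 \<le> r"
    and "r * (\<Sum>i\<in>I. c i) \<le> (\<Sum>i\<in>I. a i)"
  shows "\<exists>i\<in>I. 0 < a i \<and> r * c i \<le> a i"
proof (rule ccontr)
  assume none: "\<not> ?thesis"
  have "a i \<le> r * c i" if "i \<in> I" for i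
  proof (cases "a i = 0")
    case True
    then show ?thesis using that assms(4,5) by simp
  next
    case False
    then show ?thesis using that none assms(4) by force
  qed
  moreover have "a i0 < r * c i0" using none assms(2,3) by auto
  ultimately have "(\<Sum>i\<in>I. a i) < (\<Sum>i\<in>I. r * c i)"
    using assms(1,2) by (intro sum_strict_mono_ex1) auto
  then show False using assms(6) by (simp add: sum_distrib_left)
qed

lemma density_mult_card_vertices:
  assumes "finite G"
  shows "real (card (Domain G) + card (Range G)) * density G = real (card G)"
proof (cases "Domain G = {}")
  case False
  then have "0 < card (Domain G)" using assms by (simp add: card_gt_0_iff Domain_fst)
  then show ?thesis unfolding density_def by simp
qed (simp add: Domain_empty_iff)

lemma density_ge_half:
  assumes "finite G" "G \<noteq> {}"
  shows "1/2 \<le> density G"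
proof -
  have "card (Domain G) \<le> card G" "card (Range G) \<le> card G"
    unfolding Domain_fst Range_snd using assms(1) card_image_le by blast+
  moreover have "0 < card (Domain G)" using assms by (auto simp: card_gt_0_iff Domain_fst)
  ultimately show ?thesis unfolding density_def by (simp add: field_simps)
qed

lemma card_le_density:
  assumes "finite V" "G \<subseteq> V \<times> V"
  shows "real (card G) \<le> 2 * real (card V) * density G"
proof -
  have "Domain G \<subseteq> V" "Range G \<subseteq> V" using assms(2) by auto
  then have "real (card (Domain G) + card (Range G)) \<le> 2 * real (card V)"
    using assms(1) card_mono by (metis mult_2 add_mono of_nat_add of_nat_le_iff)
  moreover have "0 \<le> density G" unfolding density_def by simp
  moreover have "finite G" using assms by (meson finite_SigmaI finite_subset)
  ultimately show ?thesis using density_mult_card_vertices by (metis mult_right_mono)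
qed

lemma ratio_le_density_sqrt:
  assumes "finite V" "G \<subseteq> V \<times> V" "X \<subseteq> V" "Y \<subseteq> V" "A \<subseteq> G \<inter> X \<times> Y" "A \<noteq> {}"
    and r: "0 \<le> r" "r * real (card X + card Y) \<le> real (card A)"
  shows "r \<le> density G * sqrt (real (card V))"
proof -
  define a where "a = real (card A)"
  define c where "c = real (card X + card Y)"
  define d where "d = density G"
  have fin: "finite X" "finite Y" "finite G"
    using assms(1-4) finite_subset by (blast intro: finite_SigmaI)+
  have "card A \<le> card (X \<times> Y)" using assms(5) fin by (intro card_mono) auto
  then have "a \<le> real (card X) * real (card Y)" unfolding a_def
    by (metis card_cartesian_product of_nat_le_iff of_nat_mult)
  also have "\<dots> \<le> c^2 / 4" unfolding c_def
    using sum_squares_ge_zero[of "real (card X) - real (card Y)" 0] by (simp add: power2_eq_square field_simps)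
  finally have a_c: "4 * a \<le> c^2" by simp
  have a_pos: "0 < a" unfolding a_def using assms(5,6) fin(3)
    by (metis card_gt_0_iff finite_subset le_inf_iff of_nat_0_less_iff)
  have "4 * a * r^2 \<le> c^2 * r^2" using a_c by (simp add: mult_right_mono)
  also have "\<dots> = (r * c)^2" by (simp add: power_mult_distrib)
  also have "\<dots> \<le> a^2" unfolding a_def c_def using r by (intro power_mono) auto
  finally have "4 * r^2 \<le> a" using a_pos by (simp add: power2_eq_square)
  have d: "1/2 \<le> d" unfolding d_def using density_ge_half[OF fin(3)] assms(5,6) by blast
  have "a \<le> real (card G)" unfolding a_def using assms(5) fin(3) by (simp add: card_mono)
  also have "\<dots> \<le> 2 * real (card V) * d"
    unfolding d_def by (rule card_le_density[OF assms(1,2)])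
  finally have "r^2 \<le> real (card V) * d * (1/2)" using \<open>4 * r^2 \<le> a\<close> by simp
  also have "\<dots> \<le> real (card V) * d * d" using d by (intro mult_left_mono) auto
  also have "\<dots> = (d * sqrt (real (card V)))^2" by (simp add: power_mult_distrib power2_eq_square)
  finally have "r^2 \<le> (d * sqrt (real (card V)))^2" .
  moreover have "0 \<le> d * sqrt (real (card V))" using d by simp
  ultimately show ?thesis unfolding d_def by (rule power2_le_imp_le)
qed

subsection \<open>Labels, covering and center graphs\<close>

definition insert_hub :: "nat \<Rightarrow> nat set \<Rightarrow> (nat \<Rightarrow> nat set) \<Rightarrow> nat \<Rightarrow> nat set" where
  "insert_hub v D L u = (if u \<in> D then insert v (L u) else L u)"

lemma covers_mono:
  assumes "covers V E l Lf Lb u w" "Lf u \<subseteq> Lf' u" "Lb w \<subseteq> Lb' w"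
  shows "covers V E l Lf' Lb' u w"
  using assms unfolding covers_def by (meson IntD1 IntD2 IntI subsetD)

lemma uncovered_subset: "uncovered V E l Lf Lb \<subseteq> V \<times> V"
  unfolding uncovered_def by auto

lemma finite_uncovered: "finite V \<Longrightarrow> finite (uncovered V E l Lf Lb)"
  using uncovered_subset by (rule finite_subset) simp

lemma center_graph_subset_uncovered: "center_graph V E l Lf Lb v \<subseteq> uncovered V E l Lf Lb"
  unfolding center_graph_def by auto

lemma center_graph_eq_Int_uncovered:
  assumes "uncovered V E l Lf' Lb' \<subseteq> uncovered V E l Lf Lb"
  shows "center_graph V E l Lf' Lb' v = center_graph V E l Lf Lb v \<inter> uncovered V E l Lf' Lb'"
  using assms unfolding center_graph_def by auto

lemma uncovered_insert_hub:
  assumes "G = center_graph V E l Lf Lb v"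
  shows "uncovered V E l (insert_hub v (Domain G) Lf) (insert_hub v (Range G) Lb)
           \<subseteq> uncovered V E l Lf Lb - G"
proof
  fix x assume x: "x \<in> uncovered V E l (insert_hub v (Domain G) Lf) (insert_hub v (Range G) Lb)"
  then obtain u w where uw: "x = (u, w)" "u \<in> V" "w \<in> V" "reachable V E u w"
    and not_cov: "\<not> covers V E l (insert_hub v (Domain G) Lf) (insert_hub v (Range G) Lb) u w"
    unfolding uncovered_def by blast
  have "\<not> covers V E l Lf Lb u w"
  proof
    assume "covers V E l Lf Lb u w"
    then have "covers V E l (insert_hub v (Domain G) Lf) (insert_hub v (Range G) Lb) u w"
      by (rule covers_mono) (auto simp: insert_hub_def)
    then show False using not_cov by contradiction
  qed
  moreover have "x \<notin> G"
  proof
    assume "x \<in> G"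
    then obtain p where "shortest_path V E l u w p" "v \<in> set p"
      using assms uw(1) unfolding center_graph_def by blast
    moreover have "v \<in> insert_hub v (Domain G) Lf u" "v \<in> insert_hub v (Range G) Lb w"
      using \<open>x \<in> G\<close> uw(1) by (auto simp: insert_hub_def)
    ultimately show False using not_cov unfolding covers_def by blast
  qed
  ultimately show "x \<in> uncovered V E l Lf Lb - G" using uw unfolding uncovered_def by blast
qed

lemma sum_card_insert_hub_le:
  assumes "finite V" "D \<subseteq> V"
  shows "(\<Sum>u\<in>V. card (insert_hub v D L u)) \<le> (\<Sum>u\<in>V. card (L u)) + card D"
proof -
  have card_insert: "card (insert v A) \<le> Suc (card A)" for A :: "nat set"
    by (cases "finite A") (simp_all add: card_insert_if)
  have "(\<Sum>u\<in>V. card (insert_hub v D L u)) \<le> (\<Sum>u\<in>V. card (L u) + (if u \<in> D then 1 else 0))"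
    by (intro sum_mono) (simp add: insert_hub_def card_insert)
  also have "\<dots> = (\<Sum>u\<in>V. card (L u)) + card D"
    using assms by (simp add: sum.distrib sum.If_cases Int_absorb1)
  finally show ?thesis .
qed

lemma hl_size_insert_hub_le:
  assumes "finite V" "D \<subseteq> V" "R \<subseteq> V"
  shows "hl_size V (insert_hub v D Lf) (insert_hub v R Lb) \<le> hl_size V Lf Lb + card D + card R"
  using sum_card_insert_hub_le[OF assms(1,2), of v Lf] sum_card_insert_hub_le[OF assms(1,3), of v Lb]
  unfolding hl_size_def sum.distrib by simp

lemma sum_card_hub_sets:
  assumes "finite V" "\<forall>u\<in>V. L u \<subseteq> V"
  shows "(\<Sum>h\<in>V. card {u\<in>V. h \<in> L u}) = (\<Sum>u\<in>V. card (L u))"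
proof -
  have "(\<Sum>h\<in>V. card {u\<in>V. h \<in> L u}) = (\<Sum>h\<in>V. \<Sum>u\<in>V. if h \<in> L u then 1 else 0)"
    using assms(1) by (simp add: sum.inter_filter[symmetric])
  also have "\<dots> = (\<Sum>u\<in>V. \<Sum>h\<in>V. if h \<in> L u then 1 else 0)" by (rule sum.swap)
  also have "\<dots> = (\<Sum>u\<in>V. card (L u))"
    using assms by (simp add: sum.inter_filter[symmetric] Int_absorb1 Collect_conj_eq)
  finally show ?thesis .
qed

lemma hl_size_eq_sum_hubs:
  assumes "finite V" "\<forall>v\<in>V. Lf v \<subseteq> V \<and> Lb v \<subseteq> V"
  shows "hl_size V Lf Lb = (\<Sum>h\<in>V. card {u\<in>V. h \<in> Lf u} + card {w\<in>V. h \<in> Lb w})"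
  using assms sum_card_hub_sets[OF assms(1), of Lf] sum_card_hub_sets[OF assms(1), of Lb]
  unfolding hl_size_def sum.distrib by simp

lemma uncovered_subset_hub_bicliques:
  assumes "is_HL V E l Lf' Lb'"
  shows "uncovered V E l Lf Lb
           \<subseteq> (\<Union>h\<in>V. center_graph V E l Lf Lb h \<inter> {u\<in>V. h \<in> Lf' u} \<times> {w\<in>V. h \<in> Lb' w})"
proof
  fix x assume x: "x \<in> uncovered V E l Lf Lb"
  then obtain u w where uw: "x = (u, w)" "u \<in> V" "w \<in> V" "reachable V E u w"
    unfolding uncovered_def by blast
  then have "covers V E l Lf' Lb' u w" using assms unfolding is_HL_def by blast
  then obtain h p where h: "h \<in> Lf' u" "h \<in> Lb' w" "shortest_path V E l u w p" "h \<in> set p"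
    unfolding covers_def by blast
  then have "h \<in> V" using assms uw(2) unfolding is_HL_def by blast
  moreover have "x \<in> center_graph V E l Lf Lb h" using x uw(1) h(3,4) unfolding center_graph_def by blast
  ultimately show "x \<in> (\<Union>h\<in>V. center_graph V E l Lf Lb h \<inter> {u\<in>V. h \<in> Lf' u} \<times> {w\<in>V. h \<in> Lb' w})"
    using h(1,2) uw by blast
qed

lemma card_uncovered_le_sum_hub_bicliques:
  assumes "finite V" "is_HL V E l Lf' Lb'"
  shows "card (uncovered V E l Lf Lb)
           \<le> (\<Sum>h\<in>V. card (center_graph V E l Lf Lb h \<inter> {u\<in>V. h \<in> Lf' u} \<times> {w\<in>V. h \<in> Lb' w}))"
proof -
  have "finite (center_graph V E l Lf Lb h \<inter> {u\<in>V. h \<in> Lf' u} \<times> {w\<in>V. h \<in> Lb' w})" for h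
    using assms(1) by (simp add: finite_subset)
  then have "card (uncovered V E l Lf Lb)
      \<le> card (\<Union>h\<in>V. center_graph V E l Lf Lb h \<inter> {u\<in>V. h \<in> Lf' u} \<times> {w\<in>V. h \<in> Lb' w})"
    using assms uncovered_subset_hub_bicliques by (intro card_mono) auto
  also have "\<dots> \<le> (\<Sum>h\<in>V. card (center_graph V E l Lf Lb h \<inter> {u\<in>V. h \<in> Lf' u} \<times> {w\<in>V. h \<in> Lb' w}))"
    using assms(1) by (rule card_UN_le)
  finally show ?thesis .
qed

lemma exists_dense_center_graph:
  assumes fin: "finite V" and HL: "is_HL V E l Lf' Lb'" and ne: "uncovered V E l Lf Lb \<noteq> {}"
  shows "\<exists>h\<in>V. center_graph V E l Lf Lb h \<noteq> {} \<and>
           real (card (uncovered V E l Lf Lb))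
             \<le> density (center_graph V E l Lf Lb h) * sqrt (real (card V)) * real (hl_size V Lf' Lb')"
proof -
  define U where "U = uncovered V E l Lf Lb"
  define G where "G h = center_graph V E l Lf Lb h" for h
  define X where "X h = {u\<in>V. h \<in> Lf' u}" for h
  define Y where "Y h = {w\<in>V. h \<in> Lb' w}" for h
  define A where "A h = G h \<inter> X h \<times> Y h" for h
  define opt where "opt = real (hl_size V Lf' Lb')"
  have GV: "G h \<subseteq> V \<times> V" for h
    unfolding G_def using center_graph_subset_uncovered uncovered_subset by blast
  have finA: "finite (A h)" for h
    unfolding A_def using GV fin by (meson finite_Int finite_SigmaI rev_finite_subset)
  have "card U \<le> (\<Sum>h\<in>V. card (A h))"
    unfolding U_def A_def G_def X_def Y_def using fin HL by (rule card_uncovered_le_sum_hub_bicliques)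
  then have sum_A: "real (card U) \<le> (\<Sum>h\<in>V. real (card (A h)))"
    by (metis of_nat_le_iff of_nat_sum)
  have opt_eq: "opt = (\<Sum>h\<in>V. real (card (X h) + card (Y h)))"
    unfolding opt_def X_def Y_def using HL fin
    by (simp add: hl_size_eq_sum_hubs is_HL_def del: of_nat_add)
  obtain h0 where h0: "h0 \<in> V" "A h0 \<noteq> {}"
    using ne uncovered_subset_hub_bicliques[OF HL] unfolding A_def G_def X_def Y_def by blast
  then have "X h0 \<noteq> {}" unfolding A_def by blast
  then have "0 < card (X h0)" using fin unfolding X_def by (simp add: card_gt_0_iff)
  then have "0 < real (card (X h0) + card (Y h0))" by simp
  also have "\<dots> \<le> opt" unfolding opt_eq using fin h0(1) by (intro member_le_sum) auto
  finally have opt_pos: "0 < opt" .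
  define r where "r = real (card U) / opt"
  have "\<exists>h\<in>V. 0 < real (card (A h)) \<and> r * real (card (X h) + card (Y h)) \<le> real (card (A h))"
  proof (rule exists_ratio_ge_average[OF fin h0(1)])
    show "0 < real (card (A h0))" using h0(2) finA by (simp add: card_gt_0_iff)
    show "r * (\<Sum>h\<in>V. real (card (X h) + card (Y h))) \<le> (\<Sum>h\<in>V. real (card (A h)))"
      using sum_A opt_pos unfolding r_def opt_eq[symmetric] by simp
  qed (use opt_pos in \<open>auto simp: r_def\<close>)
  then obtain h where h: "h \<in> V" "A h \<noteq> {}" "r * real (card (X h) + card (Y h)) \<le> real (card (A h))"
    by (metis card.empty of_nat_0 less_irrefl)
  have "r \<le> density (G h) * sqrt (real (card V))"
    by (rule ratio_le_density_sqrt[OF fin GV _ _ _ h(2) _ h(3)])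
      (use opt_pos in \<open>auto simp: X_def Y_def A_def r_def\<close>)
  then have "r * opt \<le> density (G h) * sqrt (real (card V)) * opt"
    using opt_pos by (simp add: mult_right_mono)
  moreover have "G h \<noteq> {}" using h(2) unfolding A_def by blast
  ultimately show ?thesis using h(1) opt_pos unfolding r_def U_def G_def opt_def by auto
qed

subsection \<open>The greedy steps\<close>

lemma whhl_stepE:
  assumes "whhl_step V E l (S, Lf, Lb) (S', Lf', Lb')"
  obtains v where "uncovered V E l Lf Lb \<noteq> {}" "v \<in> V - S"
    "\<forall>v'\<in>V - S. density (center_graph V E l Lf Lb v') \<le> density (center_graph V E l Lf Lb v)"
    "S' = insert v S"
    "Lf' = insert_hub v (Domain (center_graph V E l Lf Lb v)) Lf"
    "Lb' = insert_hub v (Range (center_graph V E l Lf Lb v)) Lb"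
  using assms unfolding whhl_step_def insert_hub_def[abs_def] by auto

text \<open>w-HHL maximizes the density only over unselected vertices; this invariant guarantees that
  the dense hub found by exists_dense_center_graph is one of them.\<close>

lemma whhl_step_selected_empty:
  assumes step: "whhl_step V E l (S, Lf, Lb) (S', Lf', Lb')"
    and sel: "\<forall>v\<in>S. center_graph V E l Lf Lb v = {}"
  shows "\<forall>v\<in>S'. center_graph V E l Lf' Lb' v = {}"
proof
  obtain v where v: "S' = insert v S"
    and Lf': "Lf' = insert_hub v (Domain (center_graph V E l Lf Lb v)) Lf"
    and Lb': "Lb' = insert_hub v (Range (center_graph V E l Lf Lb v)) Lb"
    using step by (rule whhl_stepE)
  have U': "uncovered V E l Lf' Lb' \<subseteq> uncovered V E l Lf Lb - center_graph V E l Lf Lb v"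
    unfolding Lf' Lb' by (rule uncovered_insert_hub) (rule refl)
  fix v' assume "v' \<in> S'"
  have "center_graph V E l Lf' Lb' v' = center_graph V E l Lf Lb v' \<inter> uncovered V E l Lf' Lb'"
    using U' by (intro center_graph_eq_Int_uncovered) blast
  then show "center_graph V E l Lf' Lb' v' = {}"
    using \<open>v' \<in> S'\<close> v U' sel by (cases "v' = v") auto
qed

lemma densest_center_graph_charge:
  assumes fin: "finite V" and HL: "is_HL V E l Lfo Lbo" and ne: "uncovered V E l Lf Lb \<noteq> {}"
    and sel: "\<forall>v\<in>S. center_graph V E l Lf Lb v = {}" and "v \<in> V - S"
    and densest: "\<forall>v'\<in>V - S. density (center_graph V E l Lf Lb v') \<le> density (center_graph V E l Lf Lb v)"
    and G: "G = center_graph V E l Lf Lb v"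
  shows "real (card (Domain G) + card (Range G)) * real (card (uncovered V E l Lf Lb))
           \<le> sqrt (real (card V)) * real (hl_size V Lfo Lbo) * real (card G)"
proof -
  define K where "K = sqrt (real (card V)) * real (hl_size V Lfo Lbo)"
  define c where "c = real (card (Domain G) + card (Range G))"
  have K0: "0 \<le> K" unfolding K_def by simp
  obtain h where "h \<in> V" "center_graph V E l Lf Lb h \<noteq> {}"
    and dense: "real (card (uncovered V E l Lf Lb)) \<le> density (center_graph V E l Lf Lb h) * K"
    using exists_dense_center_graph[OF fin HL ne] unfolding K_def by (auto simp: mult.assoc)
  then have "h \<in> V - S" using sel by auto
  then have "real (card (uncovered V E l Lf Lb)) \<le> density G * K"
    using dense densest K0 unfolding G by (meson mult_right_mono order_trans)
  then have "c * real (card (uncovered V E l Lf Lb)) \<le> c * density G * K"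
    unfolding c_def by (simp add: mult_left_mono mult.assoc)
  also have "\<dots> = K * real (card G)"
    using density_mult_card_vertices finite_subset[OF center_graph_subset_uncovered finite_uncovered[OF fin]]
    unfolding c_def G by simp
  finally show ?thesis unfolding c_def K_def .
qed

lemma whhl_step_hl_size_le:
  assumes fin: "finite V" and HL: "is_HL V E l Lfo Lbo"
    and step: "whhl_step V E l (S, Lf, Lb) (S', Lf', Lb')"
    and sel: "\<forall>v\<in>S. center_graph V E l Lf Lb v = {}"
  shows "real (hl_size V Lf' Lb') \<le> real (hl_size V Lf Lb) +
           sqrt (real (card V)) * real (hl_size V Lfo Lbo) *
             (harm (card (uncovered V E l Lf Lb)) - harm (card (uncovered V E l Lf' Lb')))"
proof -
  define U where "U = uncovered V E l Lf Lb"
  define U' where "U' = uncovered V E l Lf' Lb'"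
  define K where "K = sqrt (real (card V)) * real (hl_size V Lfo Lbo)"
  obtain v where ne: "U \<noteq> {}" and v: "v \<in> V - S"
    and densest: "\<forall>v'\<in>V - S. density (center_graph V E l Lf Lb v') \<le> density (center_graph V E l Lf Lb v)"
    and Lf': "Lf' = insert_hub v (Domain (center_graph V E l Lf Lb v)) Lf"
    and Lb': "Lb' = insert_hub v (Range (center_graph V E l Lf Lb v)) Lb"
    using step unfolding U_def by (rule whhl_stepE)
  define G where "G = center_graph V E l Lf Lb v"
  define c where "c = card (Domain G) + card (Range G)"
  have GU: "G \<subseteq> U" unfolding G_def U_def by (rule center_graph_subset_uncovered)
  have finU: "finite U" unfolding U_def using fin by (rule finite_uncovered)
  have finG: "finite G" using GU finU by (rule finite_subset)
  have "U' \<subseteq> U - G" unfolding U'_def U_def G_def Lf' Lb' by (rule uncovered_insert_hub) (rule refl)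
  then have "card U' \<le> card (U - G)" using finU by (intro card_mono) auto
  also have "\<dots> = card U - card G" using finG GU by (rule card_Diff_subset)
  finally have "card U' \<le> card U - card G" .
  moreover have "card G \<le> card U" using finU GU by (rule card_mono)
  moreover have "real c * real (card U) \<le> K * real (card G)"
    using densest_center_graph_charge[OF fin HL ne[unfolded U_def] sel v densest G_def]
    unfolding c_def K_def U_def .
  ultimately have "real c \<le> K * (harm (card U) - harm (card U'))"
    using ne finU by (intro greedy_charge_le_harm_diff) (auto simp: card_gt_0_iff K_def)
  moreover have "G \<subseteq> V \<times> V" using GU uncovered_subset unfolding U_def by blast
  then have "hl_size V Lf' Lb' \<le> hl_size V Lf Lb + c"
    unfolding Lf' Lb' c_def G_def add.assoc[symmetric] by (intro hl_size_insert_hub_le[OF fin]) auto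
  ultimately show ?thesis unfolding K_def U_def U'_def by linarith
qed

lemma whhl_run_invariant:
  assumes fin: "finite V" and HL: "is_HL V E l Lfo Lbo"
    and run: "(whhl_step V E l)\<^sup>*\<^sup>* ({}, (\<lambda>_. {}), (\<lambda>_. {})) st"
  shows "case st of (S, Lf, Lb) \<Rightarrow> (\<forall>v\<in>S. center_graph V E l Lf Lb v = {}) \<and>
           real (hl_size V Lf Lb) \<le> sqrt (real (card V)) * real (hl_size V Lfo Lbo) *
             (harm (card (uncovered V E l (\<lambda>_. {}) (\<lambda>_. {}))) - harm (card (uncovered V E l Lf Lb)))"
  using run
proof (induction rule: rtranclp_induct)
  case base
  then show ?case by (simp add: hl_size_def)
next
  case (step st st')
  obtain S Lf Lb S' Lf' Lb' where st: "st = (S, Lf, Lb)" and st': "st' = (S', Lf', Lb')"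
    by (cases st, cases st')
  show ?case
    using step.IH whhl_step_selected_empty[OF step.hyps(2)[unfolded st st']]
      whhl_step_hl_size_le[OF fin HL step.hyps(2)[unfolded st st']]
    unfolding st st' by (auto simp: algebra_simps)
qed

lemma whhl_output_hl_size_le:
  assumes fin: "finite V" and HL: "is_HL V E l Lfo Lbo" and out: "whhl_output V E l Lf Lb"
  shows "real (hl_size V Lf Lb)
           \<le> sqrt (real (card V)) * real (hl_size V Lfo Lbo) * harm (card V * card V)"
proof -
  define N0 where "N0 = card (uncovered V E l (\<lambda>_. {}) (\<lambda>_. {}))"
  obtain S where run: "(whhl_step V E l)\<^sup>*\<^sup>* ({}, (\<lambda>_. {}), (\<lambda>_. {})) (S, Lf, Lb)"
    and all_covered: "uncovered V E l Lf Lb = {}"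
    using out unfolding whhl_output_def by blast
  have "real (hl_size V Lf Lb) \<le> sqrt (real (card V)) * real (hl_size V Lfo Lbo) * harm N0"
    using whhl_run_invariant[OF fin HL run] all_covered unfolding N0_def by (simp add: harm_def[of 0])
  moreover have "N0 \<le> card V * card V"
    unfolding N0_def using card_mono[OF _ uncovered_subset] fin by (simp add: card_cartesian_product)
  ultimately show ?thesis
    by (meson harm_mono mult_left_mono order_trans real_sqrt_ge_zero mult_nonneg_nonneg of_nat_0_le_iff)
qed

lemma harm_square_le_four_ln:
  assumes "2 \<le> n"
  shows "harm (n * n) \<le> 4 * ln (real n)"
proof -
  have "ln 2 \<le> ln (real n)" using assms by simp
  then have "2/3 \<le> ln (real n)" using ln2_ge_two_thirds by linarith
  have "harm (n * n) \<le> 1 + ln (real n * real n)"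
    using harm_le_one_plus_ln[of "n * n"] assms by simp
  also have "\<dots> = 1 + 2 * ln (real n)" using assms by (simp add: ln_mult)
  also have "\<dots> \<le> 4 * ln (real n)" using \<open>2/3 \<le> ln (real n)\<close> by simp
  finally show ?thesis .
qed

theorem mainTheorem6:
  shows "\<exists>C > 0. \<forall>V E l Lf Lb Lf' Lb'.
     graph_ok V E l \<and> 2 \<le> card V \<and> whhl_output V E l Lf Lb \<and> is_HL V E l Lf' Lb' \<longrightarrow>
     real (hl_size V Lf Lb) \<le> C * sqrt (real (card V)) * ln (real (card V)) * real (hl_size V Lf' Lb')"
proof (intro exI[of _ 4] conjI allI impI)
  fix V E l Lf Lb Lf' Lb'
  assume "graph_ok V E l \<and> 2 \<le> card V \<and> whhl_output V E l Lf Lb \<and> is_HL V E l Lf' Lb'"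
  then have fin: "finite V" and n: "2 \<le> card V" and out: "whhl_output V E l Lf Lb"
    and HL: "is_HL V E l Lf' Lb'"
    unfolding graph_ok_def by auto
  have "real (hl_size V Lf Lb)
          \<le> sqrt (real (card V)) * real (hl_size V Lf' Lb') * harm (card V * card V)"
    using fin HL out by (rule whhl_output_hl_size_le)
  also have "\<dots> \<le> sqrt (real (card V)) * real (hl_size V Lf' Lb') * (4 * ln (real (card V)))"
    using harm_square_le_four_ln[OF n] by (intro mult_left_mono) auto
  finally show "real (hl_size V Lf Lb)
                  \<le> 4 * sqrt (real (card V)) * ln (real (card V)) * real (hl_size V Lf' Lb')"
    by (simp add: algebra_simps)
qed simp

end
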